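(* Let $\mathbb{F}$ be a field and $f(x)=(x-a)(x-b)\in\mathbb{F}[x]$ with $a,b\in\mathbb{F}^*$, $a\ne b$. Then every $f$-subgroup (in the multiplicative group of any extension field of $\mathbb{F}$) is one of $\langle a,b\rangle$, $\langle a\rangle$, $\langle b\rangle$. Moreover, if an $f$-subgroup $M$ is different from $\langle a,b\rangle$, then every $f$-sequence presenting $M$ is cyclic, so $M$ is a standard $f$-subgroup. Consequently $\langle a,b\rangle$ is the only possible non-standard $f$-subgroup.
   Context: An $f$-sequence is a two-way infinite sequence $(s_n)_{n\in\mathbb{Z}}$ with $f(\sigma)s=0$, where $(\sigma s)_n=s_{n+1}$ (here: $s_n=(a+b)s_{n-1}-ab\,s_{n-2}$). A sequence $s$ presents a finite multiplicative subgroup $M$ if $s$ has smallest period $|M|$ and $M=\{s_0,\ldots,s_{|M|-1}\}$; $M$ is an $f$-subgroup if some $f$-sequence presents it. A sequence is cyclic if there is $\alpha$ with $s_{n+1}=\alpha s_n$ for all $n$. An $f$-subgroup is standard if every $f$-sequence presenting it is cyclic, and non-standard otherwise. $\langle S\rangle$ is the multiplicative group generated by $S$. *)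

theory Defs
  imports Main
begin

text \<open>The field K plays the role of an arbitrary extension field of F containing a, b.\<close>

definition f_sequence :: "'a::field \<Rightarrow> 'a \<Rightarrow> (int \<Rightarrow> 'a) \<Rightarrow> bool" where
  "f_sequence a b s \<longleftrightarrow> (\<forall>n. s n = (a + b) * s (n - 1) - a * b * s (n - 2))"

definition mult_subgroup :: "'a::field set \<Rightarrow> bool" where
  "mult_subgroup M \<longleftrightarrow> M \<subseteq> - {0} \<and> 1 \<in> M \<and> (\<forall>x\<in>M. \<forall>y\<in>M. x * y \<in> M)
     \<and> (\<forall>x\<in>M. inverse x \<in> M)"

definition gen_group :: "'a::field set \<Rightarrow> 'a set" where
  "gen_group S = \<Inter> {H. mult_subgroup H \<and> S \<subseteq> H}"

definition is_period :: "(int \<Rightarrow> 'a) \<Rightarrow> nat \<Rightarrow> bool" where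
  "is_period s p \<longleftrightarrow> 0 < p \<and> (\<forall>n. s (n + int p) = s n)"

definition smallest_period :: "(int \<Rightarrow> 'a) \<Rightarrow> nat \<Rightarrow> bool" where
  "smallest_period s p \<longleftrightarrow> is_period s p \<and> (\<forall>q. 0 < q \<and> q < p \<longrightarrow> \<not> is_period s q)"

definition presents :: "(int \<Rightarrow> 'a::field) \<Rightarrow> 'a set \<Rightarrow> bool" where
  "presents s M \<longleftrightarrow> mult_subgroup M \<and> finite M \<and> smallest_period s (card M)
     \<and> M = s ` {0..<int (card M)}"

definition f_subgroup :: "'a::field \<Rightarrow> 'a \<Rightarrow> 'a set \<Rightarrow> bool" where
  "f_subgroup a b M \<longleftrightarrow> mult_subgroup M \<and> finite M \<and> (\<exists>s. f_sequence a b s \<and> presents s M)"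

definition cyclic_seq :: "(int \<Rightarrow> 'a::field) \<Rightarrow> bool" where
  "cyclic_seq s \<longleftrightarrow> (\<exists>\<alpha>. \<forall>n. s (n + 1) = \<alpha> * s n)"

definition standard_f_subgroup :: "'a::field \<Rightarrow> 'a \<Rightarrow> 'a set \<Rightarrow> bool" where
  "standard_f_subgroup a b M \<longleftrightarrow> f_subgroup a b M \<and>
     (\<forall>s. f_sequence a b s \<and> presents s M \<longrightarrow> cyclic_seq s)"

end

theory Submission
  imports Defs "HOL-Computational_Algebra.Polynomial"
begin

text \<open>
  Put \<open>u n = s (n+1) - b s n\<close> and \<open>v n = s (n+1) - a s n\<close>. For an \<open>f\<close>-sequence, \<open>u\<close> is
  geometric with ratio \<open>a\<close>, \<open>v\<close> with ratio \<open>b\<close>, and \<open>(a - b) s = u - v\<close>. If \<open>u\<close> or \<open>v\<close>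
  vanishes identically, \<open>s\<close> is cyclic with ratio \<open>b\<close> or \<open>a\<close> and presents \<open>\<langle>b\<rangle>\<close> or \<open>\<langle>a\<rangle>\<close>.
  Otherwise, if \<open>s\<close> presents \<open>M\<close> with \<open>|M| = m\<close>, then \<open>a\<^sup>m = b\<^sup>m = 1\<close>; since a finite
  subgroup of order \<open>m\<close> of a field consists of all \<open>m\<close>-th roots of unity, \<open>a, b \<in> M\<close>.
  Conversely \<open>s\<close> has period \<open>|\<langle>a,b\<rangle>|\<close>, so minimality of the period forces \<open>M = \<langle>a,b\<rangle>\<close>.
\<close>

lemma roots_unity_finite_card_le:
  fixes m :: nat
  assumes "m > 0"
  shows "finite {x::'a::field. x ^ m = 1}" and "card {x::'a. x ^ m = 1} \<le> m"
proof -
  define p :: "'a poly" where "p = monom 1 m + [:-1:]"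
  have poly_p: "poly p x = x ^ m - 1" for x by (simp add: p_def poly_monom)
  have deg: "degree p = m" using assms unfolding p_def
    by (subst degree_add_eq_left) (simp_all add: degree_monom_eq)
  hence "p \<noteq> 0" using assms by auto
  moreover have "{x. x ^ m = 1} = {x. poly p x = 0}" by (auto simp: poly_p)
  ultimately show "finite {x::'a. x ^ m = 1}" and "card {x::'a. x ^ m = 1} \<le> m"
    using poly_roots_finite[of p] card_poly_roots_bound[of p] deg by simp_all
qed

lemma mult_subgroup_Inter:
  assumes "\<H> \<noteq> {}" and "\<And>H. H \<in> \<H> \<Longrightarrow> mult_subgroup H"
  shows "mult_subgroup (\<Inter>\<H>)"
  using assms unfolding mult_subgroup_def by blast

lemma mult_subgroup_nonzero: "mult_subgroup (- {0 :: 'a::field})"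
  unfolding mult_subgroup_def by auto

lemma mult_subgroup_gen_group:
  fixes S :: "'a::field set"
  assumes "0 \<notin> S"
  shows "mult_subgroup (gen_group S)"
  unfolding gen_group_def
  using assms mult_subgroup_nonzero by (intro mult_subgroup_Inter) auto

lemma gen_group_least: "mult_subgroup H \<Longrightarrow> S \<subseteq> H \<Longrightarrow> gen_group S \<subseteq> H"
  unfolding gen_group_def by auto

lemma gen_group_upper: "S \<subseteq> gen_group S"
  unfolding gen_group_def by auto

lemma mult_subgroup_power_card:
  assumes H: "mult_subgroup H" "finite H" and x: "x \<in> H"
  shows "x ^ card H = 1"
proof -
  have nonzero: "y \<noteq> 0" if "y \<in> H" for y using H(1) that unfolding mult_subgroup_def by auto
  have "(*) x ` H = H"
  proof
    show "(*) x ` H \<subseteq> H" using H(1) x unfolding mult_subgroup_def by auto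
    show "H \<subseteq> (*) x ` H"
    proof
      fix y assume "y \<in> H"
      hence "inverse x * y \<in> H" using H(1) x unfolding mult_subgroup_def by auto
      moreover have "y = x * (inverse x * y)" using nonzero[OF x] by simp
      ultimately show "y \<in> (*) x ` H" by blast
    qed
  qed
  moreover have "inj_on ((*) x) H" using nonzero[OF x] by (auto simp: inj_on_def)
  ultimately have "prod id H = prod ((*) x) H" by (metis prod.reindex_cong id_apply)
  also have "\<dots> = x ^ card H * prod id H" by (simp add: prod.distrib)
  finally have "prod id H = x ^ card H * prod id H" .
  moreover have "prod id H \<noteq> 0" using H(2) nonzero by simp
  ultimately show ?thesis by simp
qed

lemma finite_mult_subgroup_eq_roots_unity:
  fixes M :: "'a::field set"
  assumes "mult_subgroup M" and "finite M"
  shows "M = {x. x ^ card M = 1}"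
proof -
  let ?R = "{x::'a. x ^ card M = 1}"
  have "card M > 0" using assms unfolding mult_subgroup_def by (auto simp: card_gt_0_iff)
  hence R: "finite ?R" "card ?R \<le> card M" using roots_unity_finite_card_le by blast+
  have "M \<subseteq> ?R" using mult_subgroup_power_card[OF assms] by auto
  thus ?thesis using R by (metis card_seteq)
qed

lemma is_period_multiple:
  assumes "is_period s p"
  shows "s (n + int p * k) = s n"
proof (induction k rule: int_induct[where k = 0])
  case (step1 i)
  have "s (n + int p * (i + 1)) = s ((n + int p * i) + int p)" by (simp add: algebra_simps)
  with assms step1 show ?case unfolding is_period_def by simp
next
  case (step2 i)
  have "s (n + int p * i) = s ((n + int p * (i - 1)) + int p)" by (simp add: algebra_simps)
  with assms step2 show ?case unfolding is_period_def by simp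
qed simp

lemma presents_range:
  assumes "presents s M"
  shows "s n \<in> M"
proof -
  let ?m = "card M"
  have per: "is_period s ?m" using assms unfolding presents_def smallest_period_def by blast
  hence "?m > 0" unfolding is_period_def by blast
  hence "n mod int ?m \<in> {0..<int ?m}" by simp
  moreover have "s n = s (n mod int ?m)"
    using is_period_multiple[OF per, of "n mod int ?m" "n div int ?m"] by simp
  ultimately show ?thesis using assms unfolding presents_def by blast
qed

lemma geometric_shift:
  fixes u :: "int \<Rightarrow> 'a::monoid_mult"
  assumes "\<And>n. u (n + 1) = c * u n"
  shows "u (n + int k) = c ^ k * u n"
proof (induction k)
  case (Suc k)
  have "u (n + int (Suc k)) = u ((n + int k) + 1)" by (simp add: ac_simps)
  also have "\<dots> = c * u (n + int k)" by (rule assms)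
  finally show ?case using Suc by (simp add: mult.assoc)
qed simp

lemma geometric_periodic_ratio_root_unity:
  fixes u :: "int \<Rightarrow> 'a::field"
  assumes "\<And>n. u (n + 1) = c * u n" and "u (n + int p) = u n" and "u n \<noteq> 0"
  shows "c ^ p = 1"
  using assms geometric_shift[of u c n p] by simp

lemma presents_cyclic_eq_gen_group:
  assumes P: "presents s M" and step: "\<And>n. s (n + 1) = c * s n"
  shows "M = gen_group {c}"
proof -
  have M: "mult_subgroup M" "M = s ` {0..<int (card M)}" using P unfolding presents_def by auto
  then obtain k where k: "s k = 1" unfolding mult_subgroup_def by (metis imageE)
  have "c \<in> M" using presents_range[OF P, of "k + 1"] step[of k] k by simp
  hence c: "c \<noteq> 0" using M(1) unfolding mult_subgroup_def by auto
  have G: "mult_subgroup (gen_group {c})" using mult_subgroup_gen_group[of "{c}"] c by simp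
  have cG: "c \<in> gen_group {c}" using gen_group_upper by auto
  have "s j \<in> gen_group {c}" for j
  proof (induction j rule: int_induct[where k = k])
    case base then show ?case using k G unfolding mult_subgroup_def by auto
  next
    case (step1 i) then show ?case using step[of i] G cG unfolding mult_subgroup_def by auto
  next
    case (step2 i)
    have "s (i - 1) = inverse c * s i" using step[of "i - 1"] c by (simp add: field_simps)
    then show ?case using step2 G cG unfolding mult_subgroup_def by auto
  qed
  hence "s ` {0..<int (card M)} \<subseteq> gen_group {c}" by blast
  hence "M \<subseteq> gen_group {c}" using M(2) by simp
  moreover have "gen_group {c} \<subseteq> M" using gen_group_least[OF M(1)] \<open>c \<in> M\<close> by auto
  ultimately show ?thesis by (rule antisym)
qed

lemma f_sequence_step:
  assumes "f_sequence a b s"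
  shows "s (n + 2) = (a + b) * s (n + 1) - a * b * s n"
proof -
  have "s (n + 2) = (a + b) * s ((n + 2) - 1) - a * b * s ((n + 2) - 2)"
    using assms unfolding f_sequence_def by blast
  moreover have "(n + 2) - 1 = n + 1" "(n + 2) - 2 = n" by simp_all
  ultimately show ?thesis by simp
qed

lemma f_sequence_geometric_difference:
  assumes "f_sequence a b s"
  shows "s (n + 2) - b * s (n + 1) = a * (s (n + 1) - b * s n)"
  using f_sequence_step[OF assms, of n] by (simp add: algebra_simps)

lemma f_sequence_swap: "f_sequence a b s \<Longrightarrow> f_sequence b a s"
  unfolding f_sequence_def add.commute[of b a] mult.commute[of b a] by assumption

lemma f_sequence_presents_non_cyclic:
  fixes a b :: "'a::field"
  assumes ab: "a \<noteq> b" and F: "f_sequence a b s" and P: "presents s M"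
    and u_nonzero: "s (n1 + 1) \<noteq> b * s n1" and v_nonzero: "s (n2 + 1) \<noteq> a * s n2"
  shows "M = gen_group {a, b}"
proof -
  define u where "u n = s (n + 1) - b * s n" for n
  define v where "v n = s (n + 1) - a * s n" for n
  have u_step: "u (n + 1) = a * u n" and v_step: "v (n + 1) = b * v n" for n
    using f_sequence_geometric_difference[OF F, of n]
      f_sequence_geometric_difference[OF f_sequence_swap[OF F], of n]
    unfolding u_def v_def by (simp_all add: add.assoc)
  have u_minus_v: "(a - b) * s n = u n - v n" for n unfolding u_def v_def by (simp add: algebra_simps)
  have M: "mult_subgroup M" "finite M" "smallest_period s (card M)"
    using P unfolding presents_def by auto
  let ?m = "card M"
  have s_period: "s (n + int ?m) = s n" for n
    using M(3) unfolding smallest_period_def is_period_def by blast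
  have "a ^ ?m = 1"
    by (rule geometric_periodic_ratio_root_unity[of u a n1])
       (use u_step u_nonzero s_period[of n1] s_period[of "n1 + 1"] in \<open>simp_all add: u_def algebra_simps\<close>)
  moreover have "b ^ ?m = 1"
    by (rule geometric_periodic_ratio_root_unity[of v b n2])
       (use v_step v_nonzero s_period[of n2] s_period[of "n2 + 1"] in \<open>simp_all add: v_def algebra_simps\<close>)
  ultimately have "{a, b} \<subseteq> M"
    using finite_mult_subgroup_eq_roots_unity[OF M(1,2)] by auto
  define G where "G = gen_group {a, b}"
  have GM: "G \<subseteq> M" unfolding G_def using gen_group_least[OF M(1) \<open>{a, b} \<subseteq> M\<close>] .
  have "0 \<notin> {a, b}" using \<open>{a, b} \<subseteq> M\<close> M(1) unfolding mult_subgroup_def by auto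
  hence G: "mult_subgroup G" unfolding G_def by (rule mult_subgroup_gen_group)
  have G_finite: "finite G" using M(2) GM by (rule finite_subset[rotated])
  have "a \<in> G" "b \<in> G" using gen_group_upper[of "{a, b}"] unfolding G_def by auto
  hence "a ^ card G = 1" "b ^ card G = 1" using mult_subgroup_power_card[OF G G_finite] by simp_all
  hence "(a - b) * s (n + int (card G)) = (a - b) * s n" for n
    using geometric_shift[of u a n "card G", OF u_step] geometric_shift[of v b n "card G", OF v_step]
      u_minus_v[of n] u_minus_v[of "n + int (card G)"] by simp
  moreover have G_pos: "card G > 0"
    using G G_finite unfolding mult_subgroup_def by (auto simp: card_gt_0_iff)
  ultimately have "is_period s (card G)" using ab unfolding is_period_def by simp
  hence "card G \<ge> ?m" using M(3) G_pos unfolding smallest_period_def by (meson not_less)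
  with GM M(2) show ?thesis unfolding G_def by (metis card_seteq)
qed

lemma f_sequence_presents_cases:
  fixes a b :: "'a::field"
  assumes "a \<noteq> b" and F: "f_sequence a b s" and P: "presents s M"
  shows "M = gen_group {a, b} \<or> (cyclic_seq s \<and> (M = gen_group {a} \<or> M = gen_group {b}))"
proof (cases "\<forall>n. s (n + 1) = b * s n")
  case True
  then show ?thesis using presents_cyclic_eq_gen_group[OF P] unfolding cyclic_seq_def by blast
next
  case not_b_cyclic: False
  show ?thesis
  proof (cases "\<forall>n. s (n + 1) = a * s n")
    case True
    then show ?thesis using presents_cyclic_eq_gen_group[OF P] unfolding cyclic_seq_def by blast
  next
    case False
    with not_b_cyclic show ?thesis using f_sequence_presents_non_cyclic[OF assms] by blast
  qed
qed

theorem mainTheorem5: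
  fixes a b :: "'a::field"
  assumes "a \<noteq> 0" and "b \<noteq> 0" and "a \<noteq> b"
  shows "(\<forall>M. f_subgroup a b M \<longrightarrow>
            (M = gen_group {a, b} \<or> M = gen_group {a} \<or> M = gen_group {b}))
       \<and> (\<forall>M. f_subgroup a b M \<and> M \<noteq> gen_group {a, b} \<longrightarrow>
            (\<forall>s. f_sequence a b s \<and> presents s M \<longrightarrow> cyclic_seq s) \<and> standard_f_subgroup a b M)
       \<and> (\<forall>M. f_subgroup a b M \<and> \<not> standard_f_subgroup a b M \<longrightarrow> M = gen_group {a, b})"
proof (intro conjI allI impI)
  fix M assume "f_subgroup a b M"
  then obtain s where "f_sequence a b s" "presents s M" unfolding f_subgroup_def by blast
  then show "M = gen_group {a, b} \<or> M = gen_group {a} \<or> M = gen_group {b}"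
    using f_sequence_presents_cases[OF \<open>a \<noteq> b\<close>] by blast
next
  fix M s assume "f_subgroup a b M \<and> M \<noteq> gen_group {a, b}" "f_sequence a b s \<and> presents s M"
  then show "cyclic_seq s" using f_sequence_presents_cases[OF \<open>a \<noteq> b\<close>] by blast
next
  fix M assume "f_subgroup a b M \<and> M \<noteq> gen_group {a, b}"
  then show "standard_f_subgroup a b M"
    unfolding standard_f_subgroup_def using f_sequence_presents_cases[OF \<open>a \<noteq> b\<close>] by blast
next
  fix M assume "f_subgroup a b M \<and> \<not> standard_f_subgroup a b M"
  then obtain s where "f_sequence a b s" "presents s M" "\<not> cyclic_seq s"
    unfolding standard_f_subgroup_def by blast
  then show "M = gen_group {a, b}" using f_sequence_presents_cases[OF \<open>a \<noteq> b\<close>] by blast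
qed

end
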